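(* Let $(A,\mathfrak m,k)$ be a commutative Noetherian local ring and let $C$ be a totally acyclic complex of finitely generated free $A$-modules. Then $C$ is contractible at $n$ for some $n\in\mathbb Z$ if and only if $C$ is contractible.
   Context: A complex $C$ of finitely generated free $A$-modules is totally acyclic if $H(C)=0$ and $H(\operatorname{Hom}_A(C,A))=0$. $C$ is contractible at $n$ if there exist $A$-linear maps $s_n:C_n\to C_{n+1}$ and $s_{n-1}:C_{n-1}\to C_n$ such that $\partial^C_{n+1}s_n+s_{n-1}\partial^C_n:C_n\to C_n$ is an isomorphism. $C$ is contractible if there exist maps $s_n:C_n\to C_{n+1}$ for all $n$ such that $s_n,s_{n-1}$ give contractibility at $n$ for every $n$ (equivalently, the identity of $C$ is null-homotopic). *)

theory Defs
  imports "Jordan_Normal_Form.Matrix"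
begin

definition cr_ideal :: "'a::comm_ring_1 set \<Rightarrow> bool" where
  "cr_ideal I \<longleftrightarrow> 0 \<in> I \<and> (\<forall>x\<in>I. \<forall>y\<in>I. x + y \<in> I) \<and> (\<forall>a x. x \<in> I \<longrightarrow> a * x \<in> I)"

definition fg_ideal :: "'a::comm_ring_1 set \<Rightarrow> bool" where
  "fg_ideal I \<longleftrightarrow> (\<exists>S. finite S \<and> I = {x. \<exists>c. x = (\<Sum>s\<in>S. c s * s)})"

definition noetherian_ring :: "'a::comm_ring_1 itself \<Rightarrow> bool" where
  "noetherian_ring _ \<longleftrightarrow> (\<forall>I::'a set. cr_ideal I \<longrightarrow> fg_ideal I)"

definition maximal_ideal :: "'a::comm_ring_1 set \<Rightarrow> bool" where
  "maximal_ideal m \<longleftrightarrow> cr_ideal m \<and> m \<noteq> UNIV \<and>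
     (\<forall>J. cr_ideal J \<and> m \<subseteq> J \<longrightarrow> J = m \<or> J = UNIV)"

definition local_ring :: "'a::comm_ring_1 itself \<Rightarrow> bool" where
  "local_ring _ \<longleftrightarrow> (\<exists>!m::'a set. maximal_ideal m)"

text \<open>A complex of finitely generated free A-modules: C_n = A^(r n), the differential
  d n : C_n \<rightarrow> C_(n-1) is an (r (n-1)) x (r n) matrix acting on column vectors.
  Every A-linear map A^p \<rightarrow> A^q is given by such a matrix.\<close>

definition is_complex :: "(int \<Rightarrow> nat) \<Rightarrow> (int \<Rightarrow> 'a::comm_ring_1 mat) \<Rightarrow> bool" where
  "is_complex r d \<longleftrightarrow> (\<forall>n. d n \<in> carrier_mat (r (n - 1)) (r n)) \<and>
     (\<forall>n. d (n - 1) * d n = 0\<^sub>m (r (n - 2)) (r n))"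

definition exact_complex :: "(int \<Rightarrow> nat) \<Rightarrow> (int \<Rightarrow> 'a::comm_ring_1 mat) \<Rightarrow> bool" where
  "exact_complex r d \<longleftrightarrow> (\<forall>n. \<forall>v \<in> carrier_vec (r n).
      d n *\<^sub>v v = 0\<^sub>v (r (n - 1)) \<longrightarrow> (\<exists>w \<in> carrier_vec (r (n + 1)). v = d (n + 1) *\<^sub>v w))"

text \<open>Hom_A(C,A): its degree (-n) term is Hom_A(C_n,A) = A^(r n) (dual basis), with differential
  Hom(C_n,A) \<rightarrow> Hom(C_(n+1),A) given by the transpose of d (n+1). Reindexed with m = -n
  it is again a complex with differential of degree -1.\<close>
definition dual_ranks :: "(int \<Rightarrow> nat) \<Rightarrow> int \<Rightarrow> nat" where
  "dual_ranks r m = r (- m)"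

definition dual_diff :: "(int \<Rightarrow> 'a mat) \<Rightarrow> int \<Rightarrow> 'a mat" where
  "dual_diff d m = transpose_mat (d (- m + 1))"

definition totally_acyclic :: "(int \<Rightarrow> nat) \<Rightarrow> (int \<Rightarrow> 'a::comm_ring_1 mat) \<Rightarrow> bool" where
  "totally_acyclic r d \<longleftrightarrow> exact_complex r d \<and> exact_complex (dual_ranks r) (dual_diff d)"

definition contractible_at :: "(int \<Rightarrow> nat) \<Rightarrow> (int \<Rightarrow> 'a::comm_ring_1 mat) \<Rightarrow> int \<Rightarrow> bool" where
  "contractible_at r d n \<longleftrightarrow> (\<exists>s1 s0. s1 \<in> carrier_mat (r (n + 1)) (r n) \<and>
      s0 \<in> carrier_mat (r n) (r (n - 1)) \<and> invertible_mat (d (n + 1) * s1 + s0 * d n))"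

definition contractible :: "(int \<Rightarrow> nat) \<Rightarrow> (int \<Rightarrow> 'a::comm_ring_1 mat) \<Rightarrow> bool" where
  "contractible r d \<longleftrightarrow> (\<exists>s. (\<forall>n. s n \<in> carrier_mat (r (n + 1)) (r n)) \<and>
      (\<forall>n. invertible_mat (d (n + 1) * s n + s (n - 1) * d n)))"

end

theory Submission
  imports Defs "Jordan_Normal_Form.Char_Poly"
begin

text \<open>
  Call a matrix \<open>D\<close> regular if \<open>D T D = D\<close> for some \<open>T\<close>. A contraction at \<open>n\<close> makes
  \<open>h = d(n+1) s\<^sub>1 + s\<^sub>0 d(n)\<close> invertible, and \<open>d(n) h\<^sup>k d(n+1) = 0\<close> for all \<open>k\<close> because
  \<open>h d(n+1) = d(n+1) s\<^sub>1 d(n+1)\<close>. As \<open>h\<inverse>\<close> is a polynomial in \<open>h\<close> (Cayley--Hamilton), also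
  \<open>d(n) h\<inverse> d(n+1) = 0\<close>, and expanding \<open>d(n+1) = h h\<inverse> d(n+1)\<close> shows that \<open>d(n+1)\<close> is regular.
  By exactness, regularity of \<open>d(m)\<close> gives regularity of \<open>d(m+1)\<close>: the columns of \<open>1 - T d(m)\<close>
  lie in \<open>ker d(m) = im d(m+1)\<close>. Applied to the exact dual complex \<open>Hom(C, A)\<close>, whose
  differentials are the transposes, the same step goes down. Once all \<open>d(m+1) T(m) d(m+1) = d(m+1)\<close>,
  the idempotents \<open>d(n+1) T(n)\<close> and \<open>T(n-1) d(n)\<close> have invertible sum, so the \<open>T(n)\<close> form a
  contraction.
\<close>

section \<open>Cayley--Hamilton through the adjugate\<close>

definition char_adj_coeff :: "'a::comm_ring_1 mat \<Rightarrow> nat \<Rightarrow> 'a mat" where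
  "char_adj_coeff A k =
     mat (dim_row A) (dim_row A) (\<lambda>(i, j). coeff (adj_mat (char_poly_matrix A) $$ (i, j)) k)"

lemma dim_char_adj_coeff [simp]:
  "dim_row (char_adj_coeff A k) = dim_row A" "dim_col (char_adj_coeff A k) = dim_row A"
  unfolding char_adj_coeff_def by simp_all

lemma char_adj_coeff_carrier [simp]:
  "A \<in> carrier_mat n n \<Longrightarrow> char_adj_coeff A k \<in> carrier_mat n n"
  unfolding carrier_mat_def by simp

lemma coeff_char_poly_eq_char_adj_coeff:
  fixes A :: "'a::comm_ring_1 mat"
  assumes A: "A \<in> carrier_mat n n"
  shows "coeff (char_poly A) k \<cdot>\<^sub>m 1\<^sub>m n =
    (if k = 0 then 0\<^sub>m n n else char_adj_coeff A (k - 1)) - A * char_adj_coeff A k"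
    (is "_ = ?R")
proof (rule eq_matI)
  fix i j assume "i < dim_row (?R :: 'a mat)" "j < dim_col ?R"
  then have ij: "i < n" "j < n" using A by auto
  define M where "M = char_poly_matrix A"
  define B where "B = adj_mat M"
  have M: "M \<in> carrier_mat n n" using A unfolding M_def by simp
  have B: "B \<in> carrier_mat n n" using adj_mat(1)[OF M] unfolding B_def .
  have "(if i = j then char_poly A else 0) = (M * B) $$ (i, j)"
    using adj_mat(2)[OF M] ij unfolding B_def M_def char_poly_def by simp
  also have "\<dots> = (\<Sum>l<n. M $$ (i, l) * B $$ (l, j))"
    using M B ij by (simp add: scalar_prod_def lessThan_atLeast0)
  also have "\<dots> = (\<Sum>l<n. (if i = l then [:0, 1:] * B $$ (l, j) else 0) + [:- A $$ (i, l):] * B $$ (l, j))"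
    using A ij unfolding M_def char_poly_matrix_def
    by (intro sum.cong) (auto simp del: pCons_0_hom.hom_zero simp: distrib_right)
  also have "\<dots> = [:0, 1:] * B $$ (i, j) + (\<Sum>l<n. [:- A $$ (i, l):] * B $$ (l, j))"
    using ij by (simp only: sum.distrib sum.delta' lessThan_iff) simp
  finally have "coeff (if i = j then char_poly A else 0) k =
      coeff ([:0, 1:] * B $$ (i, j) + (\<Sum>l<n. [:- A $$ (i, l):] * B $$ (l, j))) k"
    by simp
  also have "\<dots> = (if k = 0 then 0 else coeff (B $$ (i, j)) (k - 1)) - (\<Sum>l<n. A $$ (i, l) * coeff (B $$ (l, j)) k)"
    by (cases k) (simp_all add: coeff_sum sum_negf)
  finally show "(coeff (char_poly A) k \<cdot>\<^sub>m 1\<^sub>m n) $$ (i, j) = ?R $$ (i, j)"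
    using A ij unfolding char_adj_coeff_def M_def B_def
    by (auto simp: scalar_prod_def lessThan_atLeast0 split: if_splits)
qed (use A in auto)

lemma char_adj_coeff_eventually_zero:
  fixes A :: "'a::comm_ring_1 mat"
  assumes A: "A \<in> carrier_mat n n"
  shows "\<exists>K. \<forall>k\<ge>K. char_adj_coeff A k = 0\<^sub>m n n"
proof (intro exI allI impI)
  let ?B = "adj_mat (char_poly_matrix A)"
  define K where "K = Suc (\<Sum>i<n. \<Sum>j<n. degree (?B $$ (i, j)))"
  fix k assume "K \<le> k"
  show "char_adj_coeff A k = 0\<^sub>m n n"
  proof (rule eq_matI)
    fix i j assume "i < dim_row (0\<^sub>m n n :: 'a mat)" "j < dim_col (0\<^sub>m n n :: 'a mat)"
    then have ij: "i < n" "j < n" by auto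
    have "degree (?B $$ (i, j)) \<le> (\<Sum>j<n. degree (?B $$ (i, j)))"
      using ij by (intro member_le_sum) auto
    also have "\<dots> \<le> (\<Sum>i<n. \<Sum>j<n. degree (?B $$ (i, j)))"
      using ij by (intro member_le_sum[where f = "\<lambda>i. \<Sum>j<n. degree (?B $$ (i, j))"]) auto
    finally have "degree (?B $$ (i, j)) < k" using \<open>K \<le> k\<close> unfolding K_def by simp
    then show "char_adj_coeff A k $$ (i, j) = 0\<^sub>m n n $$ (i, j)"
      using A ij unfolding char_adj_coeff_def by (simp add: coeff_eq_0)
  qed (use A in auto)
qed

lemma coeff_0_char_poly: "A \<in> carrier_mat n n \<Longrightarrow> coeff (char_poly A) 0 = det (- A)"
  unfolding char_poly_def poly_0_coeff_0[symmetric]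
  by (rule poly_det_cong[of _ n]) (auto simp: char_poly_matrix_def)

lemma char_adj_coeff_Suc:
  assumes A: "A \<in> carrier_mat n n"
  shows "char_adj_coeff A k = coeff (char_poly A) (Suc k) \<cdot>\<^sub>m 1\<^sub>m n + A * char_adj_coeff A (Suc k)"
  using coeff_char_poly_eq_char_adj_coeff[OF A, of "Suc k"] A by auto

lemma mult_char_adj_coeff_0:
  assumes A: "A \<in> carrier_mat n n"
  shows "A * char_adj_coeff A 0 = - det (- A) \<cdot>\<^sub>m 1\<^sub>m n"
proof (rule eq_matI)
  fix i j assume ij: "i < dim_row (- det (- A) \<cdot>\<^sub>m 1\<^sub>m n)" "j < dim_col (- det (- A) \<cdot>\<^sub>m 1\<^sub>m n)"
  have "det (- A) \<cdot>\<^sub>m 1\<^sub>m n = 0\<^sub>m n n - A * char_adj_coeff A 0"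
    using coeff_char_poly_eq_char_adj_coeff[OF A, of 0] coeff_0_char_poly[OF A] by simp
  from arg_cong[OF this, of "\<lambda>M. M $$ (i, j)"]
  show "(A * char_adj_coeff A 0) $$ (i, j) = (- det (- A) \<cdot>\<^sub>m 1\<^sub>m n) $$ (i, j)"
    using ij A by simp
qed (use A in simp_all)

lemma sandwich_char_adj_coeff_eq_zero:
  fixes A :: "'a::comm_ring_1 mat"
  assumes A: "A \<in> carrier_mat n n" and P: "P \<in> carrier_mat a n" and Q: "Q \<in> carrier_mat n c"
    and powers: "\<And>j. P * A ^\<^sub>m j * Q = 0\<^sub>m a c"
  shows "P * (A ^\<^sub>m j * char_adj_coeff A k) * Q = 0\<^sub>m a c"
proof -
  let ?B = "char_adj_coeff A"
  obtain K where K: "\<And>k. K \<le> k \<Longrightarrow> ?B k = 0\<^sub>m n n"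
    using char_adj_coeff_eventually_zero[OF A] by blast
  show ?thesis
  proof (induction "K - k" arbitrary: j k)
    case 0
    then show ?case using K[of k] A P Q by simp
  next
    case (Suc m)
    let ?Aj = "A ^\<^sub>m j" and ?B' = "?B (Suc k)" and ?c' = "coeff (char_poly A) (Suc k)"
    have Aj: "?Aj \<in> carrier_mat n n" and B': "?B' \<in> carrier_mat n n"
      using A by simp_all
    have S: "A ^\<^sub>m Suc j * ?B' \<in> carrier_mat n n"
      using mult_carrier_mat[OF pow_carrier_mat[OF A] B'] .
    have "m = K - Suc k" using Suc.hyps(2) by simp
    from Suc.hyps(1)[OF this] have IH: "P * (A ^\<^sub>m Suc j * ?B') * Q = 0\<^sub>m a c" .
    have "?Aj * ?B k = ?c' \<cdot>\<^sub>m ?Aj + A ^\<^sub>m Suc j * ?B'"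
      unfolding char_adj_coeff_Suc[OF A, of k] using A Aj B'
      by (simp add: mult_add_distrib_mat[of _ n n _ n] mult_smult_distrib[of _ n n _ n]
          assoc_mult_mat[of _ n n _ n _ n])
    then have "P * (?Aj * ?B k) = ?c' \<cdot>\<^sub>m (P * ?Aj) + P * (A ^\<^sub>m Suc j * ?B')"
      using mult_add_distrib_mat[OF P smult_carrier_mat[OF Aj] S] mult_smult_distrib[OF P Aj]
      by simp
    then have "P * (?Aj * ?B k) * Q = ?c' \<cdot>\<^sub>m (P * ?Aj * Q) + P * (A ^\<^sub>m Suc j * ?B') * Q"
      using P Q Aj S
      by (simp del: pow_mat.simps add: add_mult_distrib_mat[of _ a n _ _ c]
          mult_smult_assoc_mat[of _ a n _ c])
    then show ?case using IH powers[of j] P Q by (simp del: pow_mat.simps)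
  qed
qed

lemma smult_mat_eq_zero_unit:
  fixes X :: "'a::comm_ring_1 mat"
  assumes "u * c = 1" and cX: "c \<cdot>\<^sub>m X = 0\<^sub>m a b"
  shows "X = 0\<^sub>m a b"
proof -
  have X: "X \<in> carrier_mat a b"
    using arg_cong[OF cX, of dim_row] arg_cong[OF cX, of dim_col] by auto
  show ?thesis
  proof (rule eq_matI)
    fix i j assume ij: "i < dim_row (0\<^sub>m a b :: 'a mat)" "j < dim_col (0\<^sub>m a b :: 'a mat)"
    have "c * X $$ (i, j) = 0"
      using arg_cong[OF cX, of "\<lambda>M. M $$ (i, j)"] ij X by simp
    then have "(u * c) * X $$ (i, j) = 0" by (simp only: mult.assoc) simp
    then show "X $$ (i, j) = 0\<^sub>m a b $$ (i, j)" using assms(1) ij by simp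
  qed (use X in simp_all)
qed

lemma sandwich_inverse_mat_eq_zero:
  fixes A :: "'a::comm_ring_1 mat"
  assumes A: "A \<in> carrier_mat n n" and G: "G \<in> carrier_mat n n" and GA: "G * A = 1\<^sub>m n"
    and P: "P \<in> carrier_mat a n" and Q: "Q \<in> carrier_mat n c"
    and powers: "\<And>j. P * A ^\<^sub>m j * Q = 0\<^sub>m a c"
  shows "P * G * Q = 0\<^sub>m a c"
proof -
  let ?B0 = "char_adj_coeff A 0"
  have "?B0 = G * A * ?B0" using GA A by simp
  also have "\<dots> = G * (A * ?B0)" by (rule assoc_mult_mat[OF G A char_adj_coeff_carrier[OF A]])
  also have "\<dots> = - det (- A) \<cdot>\<^sub>m G"
    unfolding mult_char_adj_coeff_0[OF A] using mult_smult_distrib[OF G one_carrier_mat] G by simp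
  finally have B0: "?B0 = - det (- A) \<cdot>\<^sub>m G" .
  have "- det (- A) \<cdot>\<^sub>m (P * G * Q) = 0\<^sub>m a c"
    using sandwich_char_adj_coeff_eq_zero[OF A P Q powers, of 0 0] A G P Q unfolding B0
    by (simp add: mult_smult_distrib[OF P G] mult_smult_assoc_mat[of _ a n _ c])
  moreover have "- det (- G) * - det (- A) = 1"
  proof -
    have "det (- G) * det (- A) = det (- G * - A)" using G A by (intro det_mult[symmetric]) simp_all
    also have "- G * - A = 1\<^sub>m n" using GA G A by simp
    finally show ?thesis by simp
  qed
  ultimately show ?thesis by (rule smult_mat_eq_zero_unit[rotated])
qed

section \<open>Regular matrices\<close>

definition regular_mat :: "'a::semiring_1 mat \<Rightarrow> bool" where
  "regular_mat D \<longleftrightarrow> (\<exists>T \<in> carrier_mat (dim_col D) (dim_row D). D * T * D = D)"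

lemma regular_matI:
  "D \<in> carrier_mat a b \<Longrightarrow> T \<in> carrier_mat b a \<Longrightarrow> D * T * D = D \<Longrightarrow> regular_mat D"
  unfolding regular_mat_def by auto

lemma regular_matE:
  assumes "regular_mat D" and "D \<in> carrier_mat a b"
  obtains T where "T \<in> carrier_mat b a" "D * T * D = D"
  using assms unfolding regular_mat_def by auto

lemma regular_mat_transpose:
  fixes D :: "'a::comm_semiring_1 mat"
  assumes "regular_mat D"
  shows "regular_mat (transpose_mat D)"
proof -
  define a b where "a = dim_row D" and "b = dim_col D"
  then have D: "D \<in> carrier_mat a b" by simp
  from regular_matE[OF assms D] obtain T where T: "T \<in> carrier_mat b a" and DTD: "D * T * D = D" .
  have Dt: "transpose_mat D \<in> carrier_mat b a" and Tt: "transpose_mat T \<in> carrier_mat a b"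
    using D T by simp_all
  have "transpose_mat D = transpose_mat (D * T * D)" unfolding DTD ..
  also have "\<dots> = transpose_mat D * (transpose_mat T * transpose_mat D)"
    unfolding transpose_mult[OF mult_carrier_mat[OF D T] D] transpose_mult[OF D T] ..
  also have "\<dots> = transpose_mat D * transpose_mat T * transpose_mat D"
    using Dt Tt by simp
  finally show ?thesis by (rule regular_matI[OF Dt Tt, OF sym])
qed

lemma invertible_matI:
  assumes "h \<in> carrier_mat n n" "G \<in> carrier_mat n n" "h * G = 1\<^sub>m n" "G * h = 1\<^sub>m n"
  shows "invertible_mat h"
  using assms unfolding invertible_mat_def inverts_mat_def by auto

lemma invertible_matE:
  assumes "invertible_mat h" and h: "h \<in> carrier_mat n n"
  obtains G where "G \<in> carrier_mat n n" "h * G = 1\<^sub>m n" "G * h = 1\<^sub>m n"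
proof -
  from assms(1) obtain G where hG: "h * G = 1\<^sub>m n" and Gh: "G * h = 1\<^sub>m (dim_row G)"
    unfolding invertible_mat_def inverts_mat_def using h by auto
  have "dim_col G = n" using arg_cong[OF hG, of dim_col] by simp
  moreover have "dim_row G = n" using arg_cong[OF Gh, of dim_col] h by simp
  ultimately show ?thesis using that hG Gh by auto
qed

lemma sandwich_pow_homotopy_eq_zero:
  fixes P :: "'a::comm_ring_1 mat"
  assumes P: "P \<in> carrier_mat a b" and Q: "Q \<in> carrier_mat b c" and PQ: "P * Q = 0\<^sub>m a c"
    and S1: "S1 \<in> carrier_mat c b" and S0: "S0 \<in> carrier_mat b a"
  shows "P * (Q * S1 + S0 * P) ^\<^sub>m k * Q = 0\<^sub>m a c"
proof -
  define h where "h = Q * S1 + S0 * P"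
  have h: "h \<in> carrier_mat b b" unfolding h_def using P Q S1 S0 by auto
  have SQ: "S1 * Q \<in> carrier_mat c c" using S1 Q by simp
  have hQ: "h * Q = Q * (S1 * Q)"
  proof -
    have "h * Q = Q * S1 * Q + S0 * (P * Q)" unfolding h_def using P Q S1 S0
      by (simp add: add_mult_distrib_mat[of _ b b _ _ c])
    then show ?thesis using PQ P Q S1 S0 by simp
  qed
  have pow_hQ: "h ^\<^sub>m k * Q = Q * (S1 * Q) ^\<^sub>m k" for k
  proof (induction k)
    case 0
    show ?case using h Q S1 by simp
  next
    case (Suc k)
    have "h ^\<^sub>m Suc k * Q = h ^\<^sub>m k * (h * Q)"
      using assoc_mult_mat[OF pow_carrier_mat[OF h] h Q] by simp
    also have "\<dots> = h ^\<^sub>m k * Q * (S1 * Q)"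
      unfolding hQ by (rule assoc_mult_mat[OF pow_carrier_mat[OF h] Q SQ, symmetric])
    also have "\<dots> = Q * (S1 * Q) ^\<^sub>m Suc k"
      unfolding Suc using assoc_mult_mat[OF Q pow_carrier_mat[OF SQ] SQ] by simp
    finally show ?case .
  qed
  have "P * h ^\<^sub>m k * Q = P * (Q * (S1 * Q) ^\<^sub>m k)"
    using assoc_mult_mat[OF P pow_carrier_mat[OF h] Q] pow_hQ[of k] by simp
  also have "\<dots> = P * Q * (S1 * Q) ^\<^sub>m k"
    using assoc_mult_mat[OF P Q pow_carrier_mat[OF SQ]] by simp
  finally show ?thesis
    unfolding h_def[symmetric] using PQ left_mult_zero_mat[OF pow_carrier_mat[OF SQ]] by simp
qed

lemma regular_mat_of_invertible_homotopy:
  fixes P :: "'a::comm_ring_1 mat"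
  assumes P: "P \<in> carrier_mat a b" and Q: "Q \<in> carrier_mat b c" and PQ: "P * Q = 0\<^sub>m a c"
    and S1: "S1 \<in> carrier_mat c b" and S0: "S0 \<in> carrier_mat b a"
    and inv: "invertible_mat (Q * S1 + S0 * P)"
  shows "regular_mat Q"
proof -
  define h where "h = Q * S1 + S0 * P"
  have h: "h \<in> carrier_mat b b" unfolding h_def using P Q S1 S0 by auto
  obtain G where G: "G \<in> carrier_mat b b" and hG: "h * G = 1\<^sub>m b" and Gh: "G * h = 1\<^sub>m b"
    using invertible_matE[OF inv[folded h_def] h] .
  have GQ: "G * Q \<in> carrier_mat b c" using G Q by simp
  from sandwich_inverse_mat_eq_zero[OF h G Gh P Q
      sandwich_pow_homotopy_eq_zero[OF P Q PQ S1 S0, folded h_def]]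
  have "P * (G * Q) = 0\<^sub>m a c" using assoc_mult_mat[OF P G Q] by simp
  moreover have "Q = Q * (S1 * (G * Q)) + S0 * (P * (G * Q))"
  proof -
    have "Q = h * (G * Q)" using hG assoc_mult_mat[OF h G Q] Q by simp
    then show ?thesis
      unfolding h_def add_mult_distrib_mat[OF mult_carrier_mat[OF Q S1] mult_carrier_mat[OF S0 P] GQ]
      using assoc_mult_mat[OF Q S1 GQ] assoc_mult_mat[OF S0 P GQ] by simp
  qed
  ultimately have "Q = Q * (S1 * G) * Q"
    using S0 assoc_mult_mat[OF Q mult_carrier_mat[OF S1 G] Q] assoc_mult_mat[OF S1 G Q]
      mult_carrier_mat[OF Q mult_carrier_mat[OF S1 GQ]] by simp
  then show ?thesis using S1 G by (intro regular_matI[OF Q, of "S1 * G"]) auto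
qed

lemma factor_mat_through_image:
  fixes D :: "'a::comm_ring_1 mat"
  assumes D: "D \<in> carrier_mat a b" and E: "E \<in> carrier_mat b c"
    and ker_img: "\<And>v. v \<in> carrier_vec b \<Longrightarrow> D *\<^sub>v v = 0\<^sub>v a \<Longrightarrow> \<exists>w \<in> carrier_vec c. v = E *\<^sub>v w"
    and X: "X \<in> carrier_mat b k" and DX: "D * X = 0\<^sub>m a k"
  obtains W where "W \<in> carrier_mat c k" "X = E * W"
proof -
  have "\<forall>j \<in> {..<k}. \<exists>w \<in> carrier_vec c. col X j = E *\<^sub>v w"
  proof
    fix j assume "j \<in> {..<k}"
    then have j: "j < k" by simp
    have "D *\<^sub>v col X j = col (D * X) j" using col_mult2[OF D X j] by simp
    also have "\<dots> = 0\<^sub>v a" unfolding DX using j by auto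
    finally show "\<exists>w \<in> carrier_vec c. col X j = E *\<^sub>v w" using ker_img X j by simp
  qed
  then obtain w where w: "\<And>j. j < k \<Longrightarrow> w j \<in> carrier_vec c \<and> col X j = E *\<^sub>v w j"
    by (metis lessThan_iff)
  define W where "W = mat c k (\<lambda>(i, j). w j $ i)"
  have W: "W \<in> carrier_mat c k" unfolding W_def by simp
  have "X = E * W"
  proof (rule mat_col_eqI)
    fix j assume "j < dim_col (E * W)"
    then have j: "j < k" using W by simp
    have "col W j = w j" unfolding W_def using w[OF j] j by (intro eq_vecI) auto
    then show "col X j = col (E * W) j" unfolding col_mult2[OF E W j] using w[OF j] by simp
  qed (use X E W in auto)
  with W show ?thesis by (rule that)
qed

lemma regular_mat_of_exact:
  fixes D :: "'a::comm_ring_1 mat"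
  assumes D: "D \<in> carrier_mat a b" and E: "E \<in> carrier_mat b c" and DE: "D * E = 0\<^sub>m a c"
    and ker_img: "\<And>v. v \<in> carrier_vec b \<Longrightarrow> D *\<^sub>v v = 0\<^sub>v a \<Longrightarrow> \<exists>w \<in> carrier_vec c. v = E *\<^sub>v w"
    and "regular_mat D"
  shows "regular_mat E"
proof -
  obtain T where T: "T \<in> carrier_mat b a" and DTD: "D * T * D = D"
    using regular_matE[OF \<open>regular_mat D\<close> D] .
  define R where "R = 1\<^sub>m b - T * D"
  have R: "R \<in> carrier_mat b b" unfolding R_def using T D by auto
  have "D * R = 0\<^sub>m a b"
  proof -
    have "D * R = D * 1\<^sub>m b - D * T * D" unfolding R_def using D T
      by (simp add: mult_minus_distrib_mat[of _ a b _ b])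
    then show ?thesis unfolding DTD using D by simp
  qed
  then obtain U where U: "U \<in> carrier_mat c b" and EU: "R = E * U"
    using factor_mat_through_image[OF D E ker_img R] by blast
  have "E * U * E = 1\<^sub>m b * E - T * (D * E)"
    unfolding EU[symmetric] R_def using T D E by (simp add: minus_mult_distrib_mat[of _ b b _ _ c])
  also have "\<dots> = E" unfolding DE using T E by auto
  finally show ?thesis by (rule regular_matI[OF E U])
qed

text \<open>The inverse is \<open>1 - p q\<close>.\<close>

lemma invertible_mat_add_idempotents:
  fixes p :: "'a::comm_ring_1 mat"
  assumes p: "p \<in> carrier_mat m m" and q: "q \<in> carrier_mat m m"
    and pp: "p * p = p" and qq: "q * q = q" and qp: "q * p = 0\<^sub>m m m"
    and p_fix: "p * (1\<^sub>m m - q) = 1\<^sub>m m - q"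
  shows "invertible_mat (p + q)"
proof -
  let ?h = "p + q"
  have h: "?h \<in> carrier_mat m m" and pq: "p * q \<in> carrier_mat m m" using p q by simp_all
  have hp: "?h * p = p" using p q pp qp by (simp add: add_mult_distrib_mat[of _ m m _ _ m])
  have qh: "q * ?h = q" using p q qq qp by (simp add: mult_add_distrib_mat[of _ m m _ m])
  have p_pq: "p - p * q = 1\<^sub>m m - q"
    using p_fix p q by (simp add: mult_minus_distrib_mat[of _ m m _ m])
  have h_pq: "?h - p * q = 1\<^sub>m m"
  proof (rule eq_matI)
    fix i j assume ij: "i < dim_row (1\<^sub>m m :: 'a mat)" "j < dim_col (1\<^sub>m m :: 'a mat)"
    have "(p - p * q) $$ (i, j) = (1\<^sub>m m - q) $$ (i, j)" unfolding p_pq ..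
    then show "(?h - p * q) $$ (i, j) = 1\<^sub>m m $$ (i, j)"
      using ij p q pq by (auto simp: algebra_simps)
  qed (use pq in auto)
  have "?h * (1\<^sub>m m - p * q) = ?h - ?h * p * q"
    using h pq assoc_mult_mat[OF h p q] right_mult_one_mat[OF h]
    by (simp add: mult_minus_distrib_mat[of _ m m _ m])
  then have right: "?h * (1\<^sub>m m - p * q) = 1\<^sub>m m" unfolding hp h_pq .
  have "(1\<^sub>m m - p * q) * ?h = ?h - p * (q * ?h)"
    using h pq assoc_mult_mat[OF p q h] left_mult_one_mat[OF h]
    by (simp add: minus_mult_distrib_mat[of _ m m _ _ m])
  then have left: "(1\<^sub>m m - p * q) * ?h = 1\<^sub>m m" unfolding qh h_pq .
  show ?thesis by (rule invertible_matI[OF h minus_carrier_mat[OF pq] right left])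
qed

lemma invertible_mat_of_regular_exact:
  fixes D :: "'a::comm_ring_1 mat"
  assumes D: "D \<in> carrier_mat a b" and E: "E \<in> carrier_mat b c" and DE: "D * E = 0\<^sub>m a c"
    and ker_img: "\<And>v. v \<in> carrier_vec b \<Longrightarrow> D *\<^sub>v v = 0\<^sub>v a \<Longrightarrow> \<exists>w \<in> carrier_vec c. v = E *\<^sub>v w"
    and T: "T \<in> carrier_mat c b" and ETE: "E * T * E = E"
    and S: "S \<in> carrier_mat b a" and DSD: "D * S * D = D"
  shows "invertible_mat (E * T + S * D)"
proof (rule invertible_mat_add_idempotents)
  show p: "E * T \<in> carrier_mat b b" and q: "S * D \<in> carrier_mat b b" using E T S D by simp_all
  show "E * T * (E * T) = E * T"
    using ETE assoc_mult_mat[OF mult_carrier_mat[OF E T] E T] by simp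
  show "S * D * (S * D) = S * D"
    using DSD assoc_mult_mat[OF S D mult_carrier_mat[OF S D]] assoc_mult_mat[OF D S D] by simp
  have "D * (E * T) = 0\<^sub>m a b" using DE assoc_mult_mat[OF D E T, symmetric] T by simp
  then show "S * D * (E * T) = 0\<^sub>m b b" using assoc_mult_mat[OF S D mult_carrier_mat[OF E T]] S by simp
  have Q: "1\<^sub>m b - S * D \<in> carrier_mat b b" using minus_carrier_mat[OF q] by simp
  have "D * (1\<^sub>m b - S * D) = D * 1\<^sub>m b - D * S * D"
    using D S by (simp add: mult_minus_distrib_mat[of _ a b _ b])
  also have "\<dots> = 0\<^sub>m a b" unfolding DSD using D by simp
  finally obtain W where W: "W \<in> carrier_mat c b" and EW: "1\<^sub>m b - S * D = E * W"
    using factor_mat_through_image[OF D E ker_img Q] by blast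
  have "E * T * (E * W) = E * W"
    using ETE assoc_mult_mat[OF mult_carrier_mat[OF E T] E W] by simp
  then show "E * T * (1\<^sub>m b - S * D) = 1\<^sub>m b - S * D" unfolding EW .
qed

lemma is_complex_carrier: "is_complex r d \<Longrightarrow> d n \<in> carrier_mat (r (n - 1)) (r n)"
  unfolding is_complex_def by blast

lemma is_complex_carrier_Suc: "is_complex r d \<Longrightarrow> d (n + 1) \<in> carrier_mat (r n) (r (n + 1))"
  using is_complex_carrier[of r d "n + 1"] by simp

lemma is_complex_diff_diff:
  "is_complex r d \<Longrightarrow> d n * d (n + 1) = 0\<^sub>m (r (n - 1)) (r (n + 1))"
  unfolding is_complex_def by (metis add_diff_cancel_right' diff_diff_eq one_add_one)

lemma is_complex_dual:
  assumes cx: "is_complex r d"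
  shows "is_complex (dual_ranks r) (dual_diff d)"
  unfolding is_complex_def
proof (intro conjI allI)
  fix n
  show "dual_diff d n \<in> carrier_mat (dual_ranks r (n - 1)) (dual_ranks r n)"
    using is_complex_carrier[OF cx, of "- n + 1"] unfolding dual_diff_def dual_ranks_def by simp
  have "dual_diff d (n - 1) * dual_diff d n = transpose_mat (d (- n + 1 + 1)) * transpose_mat (d (- n + 1))"
    unfolding dual_diff_def by (simp add: algebra_simps)
  also have "\<dots> = transpose_mat (d (- n + 1) * d (- n + 1 + 1))"
    using is_complex_carrier[OF cx, of "- n + 1"] is_complex_carrier[OF cx, of "- n + 1 + 1"]
    by (intro transpose_mult[symmetric]) simp_all
  also have "\<dots> = 0\<^sub>m (dual_ranks r (n - 2)) (dual_ranks r n)"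
    unfolding is_complex_diff_diff[OF cx] dual_ranks_def by (simp add: algebra_simps)
  finally show "dual_diff d (n - 1) * dual_diff d n = 0\<^sub>m (dual_ranks r (n - 2)) (dual_ranks r n)" .
qed

lemma exact_complexD:
  "exact_complex r d \<Longrightarrow> v \<in> carrier_vec (r n) \<Longrightarrow> d n *\<^sub>v v = 0\<^sub>v (r (n - 1)) \<Longrightarrow>
    \<exists>w \<in> carrier_vec (r (n + 1)). v = d (n + 1) *\<^sub>v w"
  unfolding exact_complex_def by blast

lemma regular_diff_Suc:
  assumes cx: "is_complex r d" and ex: "exact_complex r d" and "regular_mat (d m)"
  shows "regular_mat (d (m + 1))"
  by (rule regular_mat_of_exact[OF is_complex_carrier[OF cx] is_complex_carrier_Suc[OF cx]
        is_complex_diff_diff[OF cx] _ \<open>regular_mat (d m)\<close>])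
    (fact exact_complexD[OF ex])

lemma regular_diff_pred:
  assumes cx: "is_complex r d" and ta: "totally_acyclic r d" and "regular_mat (d m)"
  shows "regular_mat (d (m - 1))"
proof -
  have "regular_mat (dual_diff d (1 - m))"
    unfolding dual_diff_def using regular_mat_transpose[OF \<open>regular_mat (d m)\<close>] by simp
  with is_complex_dual[OF cx] ta have "regular_mat (dual_diff d (1 - m + 1))"
    unfolding totally_acyclic_def by (blast intro: regular_diff_Suc)
  then have "regular_mat (transpose_mat (d (m - 1)))"
    unfolding dual_diff_def by (simp add: algebra_simps)
  from regular_mat_transpose[OF this] show ?thesis by simp
qed

lemma regular_diffs:
  assumes cx: "is_complex r d" and ta: "totally_acyclic r d" and "regular_mat (d m0)"
  shows "regular_mat (d m)"
proof (induction m rule: int_induct[of _ m0])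
  case base
  show ?case by fact
next
  case (step1 i)
  then show ?case using regular_diff_Suc[OF cx] ta unfolding totally_acyclic_def by blast
next
  case (step2 i)
  then show ?case using regular_diff_pred[OF cx ta] by blast
qed

lemma regular_diff_of_contractible_at:
  assumes cx: "is_complex r d" and "contractible_at r d n"
  shows "regular_mat (d (n + 1))"
proof -
  from \<open>contractible_at r d n\<close> obtain s1 s0 where s1: "s1 \<in> carrier_mat (r (n + 1)) (r n)"
    and s0: "s0 \<in> carrier_mat (r n) (r (n - 1))" and inv: "invertible_mat (d (n + 1) * s1 + s0 * d n)"
    unfolding contractible_at_def by blast
  from regular_mat_of_invertible_homotopy[OF is_complex_carrier[OF cx] is_complex_carrier_Suc[OF cx]
      is_complex_diff_diff[OF cx] s1 s0 inv]
  show ?thesis .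
qed

lemma contractible_of_regular_diffs:
  assumes cx: "is_complex r d" and ex: "exact_complex r d" and reg: "\<And>m. regular_mat (d m)"
  shows "contractible r d"
proof -
  have "\<exists>t. t \<in> carrier_mat (r (n + 1)) (r n) \<and> d (n + 1) * t * d (n + 1) = d (n + 1)" for n
    using regular_matE[OF reg is_complex_carrier_Suc[OF cx]] by blast
  then obtain t where t: "\<And>n. t n \<in> carrier_mat (r (n + 1)) (r n)"
    and dtd: "\<And>n. d (n + 1) * t n * d (n + 1) = d (n + 1)" by metis
  have t_pred: "t (n - 1) \<in> carrier_mat (r n) (r (n - 1))"
    and dtd_pred: "d n * t (n - 1) * d n = d n" for n
    using t[of "n - 1"] dtd[of "n - 1"] by simp_all
  have "invertible_mat (d (n + 1) * t n + t (n - 1) * d n)" for n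
    by (rule invertible_mat_of_regular_exact[OF is_complex_carrier[OF cx] is_complex_carrier_Suc[OF cx]
          is_complex_diff_diff[OF cx] _ t dtd t_pred dtd_pred])
      (fact exact_complexD[OF ex])
  with t show ?thesis unfolding contractible_def by blast
qed

lemma contractible_at_of_contractible: "contractible r d \<Longrightarrow> contractible_at r d n"
  unfolding contractible_def contractible_at_def by (metis diff_add_cancel)

theorem mainTheorem3:
  fixes r :: "int \<Rightarrow> nat" and d :: "int \<Rightarrow> 'a::comm_ring_1 mat"
  assumes "noetherian_ring TYPE('a)" and "local_ring TYPE('a)"
    and "is_complex r d" and "totally_acyclic r d"
  shows "(\<exists>n. contractible_at r d n) \<longleftrightarrow> contractible r d"
proof
  assume "\<exists>n. contractible_at r d n"
  then obtain n where "contractible_at r d n" ..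
  from regular_diff_of_contractible_at[OF assms(3) this]
  have "regular_mat (d m)" for m by (rule regular_diffs[OF assms(3,4)])
  with assms(3,4) show "contractible r d"
    unfolding totally_acyclic_def by (blast intro: contractible_of_regular_diffs)
next
  assume "contractible r d"
  then show "\<exists>n. contractible_at r d n" by (blast intro: contractible_at_of_contractible)
qed

end
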